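(* For every graph $G$ the following are equivalent. (1) $G$ is a pseudo-cograph. (2) $G$ is a cograph, or there is a vertex $v\in V(G)$ such that (B1) $G-v$ or $\overline{G-v}$ is disconnected, with $\mathfrak C$ the set of connected components of that disconnected graph; (B2) $G[V(H)\cup\{v\}]$ is a cograph for every $H\in\mathfrak C$; and (B3) all edges of the graph $\Gamma(G,v)$ are incident to one common vertex. (3) $G$ is a cograph, or there is a vertex $v\in V(G)$ such that (C1) $G-v$ or $\overline{G-v}$ is disconnected, with $\mathfrak C$ the set of connected components of that disconnected graph; and (C2) there is at least one and at most two components $H\in\mathfrak C$ such that both $G[V(H)\cup\{v\}]$ and $G[V(G)\setminus V(H)]$ are cographs.
   Context: Graphs finite, simple, undirected; $G[W]$ induced subgraph; $G-v$ is $G$ with $v$ deleted; $\overline H$ complement; the join of vertex-disjoint graphs adds all edges between them to the disjoint union; a cograph is a graph without induced $P_4$. $G$ is a pseudo-cograph if $|V(G)|\le2$ or there are induced subgraphs $G_1,G_2$ and $v\in V(G)$ with (F1) $V(G)=V(G_1)\cup V(G_2)$, $V(G_1)\cap V(G_2)=\{v\}$, $|V(G_1)|,|V(G_2)|>1$; (F2) $G_1,G_2$ cographs; (F3) $G-v$ is the join or the disjoint union of $G_1-v$ and $G_2-v$. Given $v$ and $\mathfrak C$ as in (B1), $\Gamma(G,v)$ is the undirected graph with vertex set $\mathfrak C$ in which $\{H,H'\}$ is an edge iff the subgraph of $G$ induced by $V(H)\cup V(H')\cup\{v\}$ contains an induced $P_4$. *)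

theory Defs
  imports Main
begin

text \<open>A finite simple undirected graph is given by a finite vertex set V and a
symmetric irreflexive edge relation E. Induced subgraphs G[W] are (W, E).\<close>

definition graph :: "'a set \<Rightarrow> ('a \<Rightarrow> 'a \<Rightarrow> bool) \<Rightarrow> bool" where
  "graph V E \<longleftrightarrow> finite V \<and> (\<forall>x y. E x y \<longrightarrow> E y x) \<and> (\<forall>x. \<not> E x x)"

definition compl_edges :: "('a \<Rightarrow> 'a \<Rightarrow> bool) \<Rightarrow> 'a \<Rightarrow> 'a \<Rightarrow> bool" where
  "compl_edges E x y \<longleftrightarrow> x \<noteq> y \<and> \<not> E x y"

definition has_induced_P4 :: "'a set \<Rightarrow> ('a \<Rightarrow> 'a \<Rightarrow> bool) \<Rightarrow> bool" where
  "has_induced_P4 V E \<longleftrightarrow> (\<exists>a\<in>V. \<exists>b\<in>V. \<exists>c\<in>V. \<exists>d\<in>V.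
      distinct [a, b, c, d] \<and> E a b \<and> E b c \<and> E c d \<and>
      \<not> E a c \<and> \<not> E a d \<and> \<not> E b d)"

definition cograph :: "'a set \<Rightarrow> ('a \<Rightarrow> 'a \<Rightarrow> bool) \<Rightarrow> bool" where
  "cograph V E \<longleftrightarrow> \<not> has_induced_P4 V E"

definition reach :: "'a set \<Rightarrow> ('a \<Rightarrow> 'a \<Rightarrow> bool) \<Rightarrow> 'a \<Rightarrow> 'a \<Rightarrow> bool" where
  "reach V E = (\<lambda>x y. x \<in> V \<and> y \<in> V \<and> E x y)\<^sup>*\<^sup>*"

definition components :: "'a set \<Rightarrow> ('a \<Rightarrow> 'a \<Rightarrow> bool) \<Rightarrow> 'a set set" where
  "components V E = {{y \<in> V. reach V E x y} | x. x \<in> V}"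

definition disconnected :: "'a set \<Rightarrow> ('a \<Rightarrow> 'a \<Rightarrow> bool) \<Rightarrow> bool" where
  "disconnected V E \<longleftrightarrow> (\<exists>x\<in>V. \<exists>y\<in>V. \<not> reach V E x y)"

definition pseudo_cograph :: "'a set \<Rightarrow> ('a \<Rightarrow> 'a \<Rightarrow> bool) \<Rightarrow> bool" where
  "pseudo_cograph V E \<longleftrightarrow> card V \<le> 2 \<or>
     (\<exists>V1 V2 v. V1 \<subseteq> V \<and> V2 \<subseteq> V \<and> v \<in> V \<and>
        V = V1 \<union> V2 \<and> V1 \<inter> V2 = {v} \<and> card V1 > 1 \<and> card V2 > 1 \<and>
        cograph V1 E \<and> cograph V2 E \<and>
        ((\<forall>x\<in>V1 - {v}. \<forall>y\<in>V2 - {v}. E x y) \<or>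
         (\<forall>x\<in>V1 - {v}. \<forall>y\<in>V2 - {v}. \<not> E x y)))"

text \<open>Edge {H,H'} of Gamma(G,v), for H, H' in the component set.\<close>
definition Gamma_edge :: "'a set \<Rightarrow> ('a \<Rightarrow> 'a \<Rightarrow> bool) \<Rightarrow> 'a \<Rightarrow> 'a set \<Rightarrow> 'a set \<Rightarrow> bool" where
  "Gamma_edge V E v H H' \<longleftrightarrow> H \<noteq> H' \<and> has_induced_P4 (H \<union> H' \<union> {v}) E"

end

theory Submission
  imports Defs
begin

text \<open>Up to complementation, which preserves induced \<open>P\<^sub>4\<close>s, a pseudo-cograph is a pair of
  cographs glued at a vertex \<open>v\<close> with no edges between the two sides. A \<open>P\<^sub>4\<close> minus one
  vertex has at most two connected pieces, so every induced \<open>P\<^sub>4\<close> of \<open>G\<close> lies in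
  \<open>H \<union> H' \<union> {v}\<close> for two components \<open>H, H'\<close> of \<open>G - v\<close> (or of its complement).
  Hence a component \<open>H\<^sub>0\<close> with \<open>G[H\<^sub>0 \<union> {v}]\<close> and \<open>G - H\<^sub>0\<close> both cographs is a centre of the
  star \<open>\<Gamma>(G, v)\<close>, and conversely; if \<open>G\<close> contains a \<open>P\<^sub>4\<close> there are at most two of them.
  For glued cographs every \<open>\<Gamma>\<close>-edge joins the two sides, and in a \<open>\<Gamma>\<close>-edge both components
  meet the neighbourhood of \<open>v\<close> while one of them contains an edge leaving it; two disjoint
  \<open>\<Gamma>\<close>-edges would therefore produce a \<open>P\<^sub>4\<close> on one side, so the \<open>\<Gamma>\<close>-edges form a star.
  Cographs themselves are pseudo-cographs by Seinsche's theorem: a cograph on at least two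
  vertices is disconnected or has a disconnected complement.\<close>

section \<open>Induced paths and complements\<close>

lemma has_induced_P4I:
  assumes "a \<in> W" "b \<in> W" "c \<in> W" "d \<in> W" "distinct [a, b, c, d]"
    "E a b" "E b c" "E c d" "\<not> E a c" "\<not> E a d" "\<not> E b d"
  shows "has_induced_P4 W E"
  using assms unfolding has_induced_P4_def by blast

lemma has_induced_P4_mono: "has_induced_P4 W E \<Longrightarrow> W \<subseteq> W' \<Longrightarrow> has_induced_P4 W' E"
  unfolding has_induced_P4_def by blast

lemma cograph_subset: "cograph W E \<Longrightarrow> W' \<subseteq> W \<Longrightarrow> cograph W' E"
  unfolding cograph_def using has_induced_P4_mono by blast

lemma cograph_if_card_le_2:
  assumes "finite W" "card W \<le> 2"
  shows "cograph W E"
  unfolding cograph_def has_induced_P4_def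
proof clarify
  fix a b c d assume "a \<in> W" "b \<in> W" "c \<in> W" "d \<in> W" "distinct [a, b, c, d]"
  then have "card {a, b, c, d} \<le> card W" by (intro card_mono[OF assms(1)]) auto
  with \<open>distinct [a, b, c, d]\<close> assms(2) show False by simp
qed

text \<open>The complement of the path \<open>a b c d\<close> is the path \<open>b d a c\<close>.\<close>
lemma has_induced_P4_compl_edges_iff:
  assumes "symp E"
  shows "has_induced_P4 W (compl_edges E) \<longleftrightarrow> has_induced_P4 W E"
proof
  assume "has_induced_P4 W (compl_edges E)"
  then obtain a b c d where "a \<in> W" "b \<in> W" "c \<in> W" "d \<in> W" "distinct [a, b, c, d]"
      "compl_edges E a b" "compl_edges E b c" "compl_edges E c d"
      "\<not> compl_edges E a c" "\<not> compl_edges E a d" "\<not> compl_edges E b d"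
    unfolding has_induced_P4_def by blast
  then show "has_induced_P4 W E"
    by (intro has_induced_P4I[of b W d a c]) (auto simp: compl_edges_def dest: sympD[OF assms])
next
  assume "has_induced_P4 W E"
  then obtain a b c d where "a \<in> W" "b \<in> W" "c \<in> W" "d \<in> W" "distinct [a, b, c, d]"
      "E a b" "E b c" "E c d" "\<not> E a c" "\<not> E a d" "\<not> E b d"
    unfolding has_induced_P4_def by blast
  then show "has_induced_P4 W (compl_edges E)"
    by (intro has_induced_P4I[of b W d a c]) (auto simp: compl_edges_def dest: sympD[OF assms])
qed

lemma symp_compl_edges: "symp E \<Longrightarrow> symp (compl_edges E)"
  unfolding compl_edges_def by (rule sympI) (blast dest: sympD)

lemma symp_compl_choice: "symp E \<Longrightarrow> F = E \<or> F = compl_edges E \<Longrightarrow> symp F"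
  using symp_compl_edges by blast

lemma has_induced_P4_compl_choice:
  "symp E \<Longrightarrow> F = E \<or> F = compl_edges E \<Longrightarrow> has_induced_P4 W F \<longleftrightarrow> has_induced_P4 W E"
  using has_induced_P4_compl_edges_iff by blast

lemma cograph_compl_choice:
  "symp E \<Longrightarrow> F = E \<or> F = compl_edges E \<Longrightarrow> cograph W F \<longleftrightarrow> cograph W E"
  unfolding cograph_def using has_induced_P4_compl_choice by blast

lemma Gamma_edge_compl_choice:
  "symp E \<Longrightarrow> F = E \<or> F = compl_edges E \<Longrightarrow> Gamma_edge V F v H K \<longleftrightarrow> Gamma_edge V E v H K"
  unfolding Gamma_edge_def using has_induced_P4_compl_choice by blast

lemma Gamma_edge_commute: "Gamma_edge V E v H K \<Longrightarrow> Gamma_edge V E v K H"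
  unfolding Gamma_edge_def by (simp add: sup_commute eq_commute)

lemma graph_symp: "graph V E \<Longrightarrow> symp E"
  by (simp add: graph_def symp_def)

lemma graph_subset: "graph V E \<Longrightarrow> W \<subseteq> V \<Longrightarrow> graph W E"
  unfolding graph_def using finite_subset by blast

lemma compl_edges_compl_edges: "graph V E \<Longrightarrow> compl_edges (compl_edges E) = E"
  by (auto simp: graph_def compl_edges_def fun_eq_iff)

section \<open>Connected components\<close>

lemma reach_edge: "x \<in> W \<Longrightarrow> y \<in> W \<Longrightarrow> E x y \<Longrightarrow> reach W E x y"
  unfolding reach_def by (rule r_into_rtranclp) simp

lemma reach_trans: "reach W E x y \<Longrightarrow> reach W E y z \<Longrightarrow> reach W E x z"
  unfolding reach_def by (rule rtranclp_trans)

lemma reach_sym: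
  assumes "symp E" "reach W E x y"
  shows "reach W E y x"
proof -
  have "symp (\<lambda>x y. x \<in> W \<and> y \<in> W \<and> E x y)"
    using assms(1) by (auto intro: sympI dest: sympD)
  then show ?thesis
    using assms(2) unfolding reach_def by (blast dest: sympD[OF symp_rtranclp])
qed

lemma reach_in_closed_set:
  assumes "reach W E x y" "x \<in> S" "\<And>a b. a \<in> S \<Longrightarrow> b \<in> W \<Longrightarrow> E a b \<Longrightarrow> b \<in> S"
  shows "y \<in> S"
  using assms(1) unfolding reach_def
  by (induction rule: rtranclp_induct) (use assms(2,3) in auto)

definition component_of :: "'a set \<Rightarrow> ('a \<Rightarrow> 'a \<Rightarrow> bool) \<Rightarrow> 'a \<Rightarrow> 'a set" where
  "component_of W E x = {y \<in> W. reach W E x y}"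

lemma components_eq_image: "components W E = component_of W E ` W"
  unfolding components_def component_of_def by blast

lemma finite_components: "finite W \<Longrightarrow> finite (components W E)"
  by (simp add: components_eq_image)

lemma component_of_in_components: "x \<in> W \<Longrightarrow> component_of W E x \<in> components W E"
  by (simp add: components_eq_image)

lemma component_of_self: "x \<in> W \<Longrightarrow> x \<in> component_of W E x"
  by (simp add: component_of_def reach_def)

lemma component_of_edge_closed:
  "a \<in> component_of W E x \<Longrightarrow> b \<in> W \<Longrightarrow> E a b \<Longrightarrow> b \<in> component_of W E x"
  unfolding component_of_def by (blast intro: reach_trans reach_edge)

lemma component_of_reach_closed:
  assumes "reach W E a b" "a \<in> component_of W E x"
  shows "b \<in> component_of W E x"
proof (rule reach_in_closed_set[OF assms])
  fix a' b' assume "a' \<in> component_of W E x" "b' \<in> W" "E a' b'"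
  then show "b' \<in> component_of W E x" by (rule component_of_edge_closed)
qed

lemma component_of_subset_closed_set:
  assumes "x \<in> S" "\<And>a b. a \<in> S \<Longrightarrow> b \<in> W \<Longrightarrow> E a b \<Longrightarrow> b \<in> S"
  shows "component_of W E x \<subseteq> S"
  unfolding component_of_def using reach_in_closed_set[of W E x _ S] assms by blast

lemma components_subset: "H \<in> components W E \<Longrightarrow> H \<subseteq> W"
  by (auto simp: components_eq_image component_of_def)

lemma components_nonempty: "H \<in> components W E \<Longrightarrow> H \<noteq> {}"
  by (auto simp: components_eq_image dest: component_of_self)

lemma components_edge_closed:
  "H \<in> components W E \<Longrightarrow> a \<in> H \<Longrightarrow> b \<in> W \<Longrightarrow> E a b \<Longrightarrow> b \<in> H"
  by (auto simp: components_eq_image intro: component_of_edge_closed)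

lemma components_eq_component_of:
  assumes "symp E" "H \<in> components W E" "y \<in> H"
  shows "H = component_of W E y"
proof -
  obtain x where H: "H = component_of W E x" using assms(2) by (auto simp: components_eq_image)
  then have "reach W E x y" "reach W E y x"
    using assms(3) reach_sym[OF assms(1)] by (auto simp: component_of_def)
  then show ?thesis
    unfolding H component_of_def by (blast intro: reach_trans)
qed

lemma components_disjoint:
  "symp E \<Longrightarrow> H \<in> components W E \<Longrightarrow> K \<in> components W E \<Longrightarrow> H \<noteq> K \<Longrightarrow> H \<inter> K = {}"
  using components_eq_component_of by (metis disjoint_iff)

lemma components_no_edge:
  assumes "symp E" "H \<in> components W E" "K \<in> components W E" "H \<noteq> K" "a \<in> H" "b \<in> K"
  shows "\<not> E a b"
  using components_edge_closed[OF assms(2,5)] components_subset[OF assms(3)]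
    components_disjoint[OF assms(1-4)] assms(6) by blast

lemma disconnected_two_components:
  assumes "disconnected W E"
  shows "\<exists>H\<in>components W E. \<exists>K\<in>components W E. H \<noteq> K"
proof -
  obtain x y where "x \<in> W" "y \<in> W" "\<not> reach W E x y"
    using assms unfolding disconnected_def by blast
  then have "component_of W E x \<noteq> component_of W E y"
    using component_of_self[of y W E] by (auto simp: component_of_def)
  with \<open>x \<in> W\<close> \<open>y \<in> W\<close> show ?thesis by (blast intro: component_of_in_components)
qed

lemma disconnected_vertex_outside_component:
  assumes "symp E" "disconnected W E" "x \<in> W"
  obtains y where "y \<in> W" "y \<notin> component_of W E x" "x \<notin> component_of W E y"
proof -
  obtain Y where Y: "Y \<in> components W E" "Y \<noteq> component_of W E x"
    using disconnected_two_components[OF assms(2)] by blast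
  then obtain y where y: "y \<in> Y" using components_nonempty by blast
  have "Y = component_of W E y" by (rule components_eq_component_of[OF assms(1) Y(1) y])
  moreover have "Y \<inter> component_of W E x = {}"
    by (rule components_disjoint[OF assms(1) Y(1) component_of_in_components[OF assms(3)] Y(2)])
  ultimately show thesis
    using that y components_subset[OF Y(1)] component_of_self[OF assms(3)] by blast
qed

section \<open>Seinsche's theorem\<close>

lemma two_vertices_disconnected_or_compl_disconnected:
  assumes "u \<noteq> w"
  shows "disconnected {u, w} E \<or> disconnected {u, w} (compl_edges E)"
proof (cases "E u w")
  case True
  have "w \<notin> {u}" using assms by simp
  then have "\<not> reach {u, w} (compl_edges E) u w"
    using reach_in_closed_set[of "{u, w}" "compl_edges E" u w "{u}"] True
    unfolding compl_edges_def by blast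
  then show ?thesis unfolding disconnected_def by blast
next
  case False
  have "w \<notin> {u}" using assms by simp
  then have "\<not> reach {u, w} E u w"
    using reach_in_closed_set[of "{u, w}" E u w "{u}"] False by blast
  then show ?thesis unfolding disconnected_def by blast
qed

lemma reach_crosses_neighbourhood:
  assumes "reach W E p y" "E u p" "\<not> E u y"
  shows "\<exists>c d. reach W E p c \<and> reach W E p d \<and> E c d \<and> E u c \<and> \<not> E u d"
  using assms(1,3) unfolding reach_def
proof (induction rule: rtranclp_induct)
  case base
  then show ?case using assms(2) by simp
next
  case (step y z)
  then show ?case by (cases "E u y") (auto intro: rtranclp.rtrancl_into_rtrancl)
qed

lemma neighbour_in_component:
  assumes "symp E" "\<not> disconnected W E" "u \<in> W" "z \<in> W - {u}" "w \<in> W - {u}"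
    "w \<notin> component_of (W - {u}) E z"
  shows "\<exists>p \<in> component_of (W - {u}) E z. E u p"
proof (rule ccontr)
  assume no_nbr: "\<not> ?thesis"
  have "reach W E z w" using assms(2,4,5) unfolding disconnected_def by blast
  moreover have "b \<in> component_of (W - {u}) E z"
    if "a \<in> component_of (W - {u}) E z" "b \<in> W" "E a b" for a b
    using that no_nbr component_of_edge_closed[OF that(1)] sympD[OF assms(1)] by blast
  ultimately have "w \<in> component_of (W - {u}) E z"
    using reach_in_closed_set[of W E z w] component_of_self[of z "W - {u}" E] assms(4) by blast
  with assms(6) show False ..
qed

lemma non_neighbour_if_compl_connected:
  assumes "\<not> disconnected W (compl_edges E)" "u \<in> W" "y \<in> W - {u}"
  shows "\<exists>x \<in> W - {u}. \<not> E u x"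
proof (rule ccontr)
  assume "\<not> ?thesis"
  then have "\<not> reach W (compl_edges E) u y"
    using reach_in_closed_set[of W "compl_edges E" u y "{u}"] assms(3)
    by (auto simp: compl_edges_def)
  with assms show False unfolding disconnected_def by blast
qed

text \<open>Writing \<open>W' = W - {u}\<close>, \<open>u\<close> has a non-neighbour \<open>x\<close>, and neighbours \<open>p\<close> and \<open>q\<close> in the
  component of \<open>x\<close> and in some other component of \<open>W'\<close>. On a path from \<open>p\<close> to \<open>x\<close>
  some edge \<open>c d\<close> leaves the neighbourhood of \<open>u\<close>, and \<open>d c u q\<close> is an induced \<open>P\<^sub>4\<close>.\<close>
lemma has_induced_P4_if_vertex_deletion_disconnects:
  assumes "symp E" "u \<in> W" "disconnected (W - {u}) E"
    "\<not> disconnected W E" "\<not> disconnected W (compl_edges E)"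
  shows "has_induced_P4 W E"
proof -
  let ?W' = "W - {u}"
  let ?C = "component_of ?W' E"
  obtain y\<^sub>1 where "y\<^sub>1 \<in> ?W'" using assms(3) unfolding disconnected_def by blast
  then obtain x where x: "x \<in> ?W'" "\<not> E u x"
    using non_neighbour_if_compl_connected[OF assms(5,2)] by blast
  obtain y where y: "y \<in> ?W'" "y \<notin> ?C x" "x \<notin> ?C y"
    by (rule disconnected_vertex_outside_component[OF assms(1,3) x(1)])
  have C: "?C x \<in> components ?W' E" "?C y \<in> components ?W' E" "?C x \<noteq> ?C y"
    using component_of_in_components[OF x(1)] component_of_in_components[OF y(1)]
      component_of_self[OF y(1)] y(2) by blast+
  obtain p where p: "p \<in> ?C x" "E u p"
    using neighbour_in_component[OF assms(1,4,2) x(1) y(1,2)] by blast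
  obtain q where q: "q \<in> ?C y" "E u q"
    using neighbour_in_component[OF assms(1,4,2) y(1) x(1) y(3)] by blast
  have "reach ?W' E x p" using p(1) by (simp add: component_of_def)
  then have "reach ?W' E p x" by (rule reach_sym[OF assms(1)])
  then obtain c d where cd: "reach ?W' E p c" "reach ?W' E p d" "E c d" "E u c" "\<not> E u d"
    using reach_crosses_neighbourhood[of ?W' E p x u] p(2) x(2) by blast
  have cd_C: "c \<in> ?C x" "d \<in> ?C x"
    using component_of_reach_closed[OF cd(1) p(1)] component_of_reach_closed[OF cd(2) p(1)] .
  have no_q: "\<not> E c q" "\<not> E d q" "q \<noteq> c" "q \<noteq> d"
    using components_no_edge[OF assms(1) C] components_disjoint[OF assms(1) C] cd_C q(1) by blast+
  have in_W': "c \<in> ?W'" "d \<in> ?W'" "q \<in> ?W'"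
    using cd_C q(1) components_subset[OF C(1)] components_subset[OF C(2)] by blast+
  show ?thesis
  proof (rule has_induced_P4I[of d W c u q])
    show "d \<in> W" "c \<in> W" "q \<in> W" using in_W' by auto
    show "distinct [d, c, u, q]" using in_W' cd(4,5) no_q by auto
    show "E d c" "E c u" "\<not> E d u" using cd(3-5) sympD[OF assms(1)] by blast+
  qed (use assms(2) q(2) no_q in auto)
qed

theorem cograph_disconnected_or_compl_disconnected:
  assumes "graph W E" "2 \<le> card W" "cograph W E"
  shows "disconnected W E \<or> disconnected W (compl_edges E)"
proof -
  have "finite W" using assms(1) by (simp add: graph_def)
  then show ?thesis using assms
  proof (induction W rule: finite_induct)
    case empty
    then show ?case by simp
  next
    case (insert u W)
    have sym: "symp E" by (rule graph_symp[OF insert.prems(1)])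
    have u: "u \<in> insert u W" and W_eq: "insert u W - {u} = W" using insert.hyps(2) by auto
    show ?case
    proof (rule ccontr)
      assume connected: "\<not> ?case"
      have no_P4: "\<not> has_induced_P4 (insert u W) F" if "F = E \<or> F = compl_edges E" for F
        using insert.prems(3) has_induced_P4_compl_choice[OF sym that] by (simp add: cograph_def)
      show False
      proof (cases "card W = 1")
        case True
        then obtain w where "W = {w}" "u \<noteq> w" using insert.hyps(2) card_1_singletonE by blast
        then show False
          using two_vertices_disconnected_or_compl_disconnected[of u w E] connected by simp
      next
        case False
        then have "2 \<le> card W" using insert by simp
        moreover have "graph W E" "cograph W E"
          using insert.prems graph_subset cograph_subset by blast+
        ultimately have "disconnected W E \<or> disconnected W (compl_edges E)"
          using insert.IH by blast
        moreover have "\<not> disconnected (insert u W) (compl_edges (compl_edges E))"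
          using connected compl_edges_compl_edges[OF insert.prems(1)] by simp
        ultimately show False
        proof (elim disjE)
          assume "disconnected W E"
          then have "has_induced_P4 (insert u W) E"
            using has_induced_P4_if_vertex_deletion_disconnects[OF sym u] connected W_eq by simp
          with no_P4 show False by blast
        next
          assume "disconnected W (compl_edges E)"
          then have "has_induced_P4 (insert u W) (compl_edges E)"
            using has_induced_P4_if_vertex_deletion_disconnects[OF symp_compl_edges[OF sym] u]
              connected W_eq \<open>\<not> disconnected (insert u W) (compl_edges (compl_edges E))\<close> by simp
          with no_P4 show False by blast
        qed
      qed
    qed
  qed
qed

section \<open>Components of \<open>G - v\<close>\<close>

definition has_neighbour_in :: "('a \<Rightarrow> 'a \<Rightarrow> bool) \<Rightarrow> 'a \<Rightarrow> 'a set \<Rightarrow> bool" where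
  "has_neighbour_in E v X \<longleftrightarrow> (\<exists>a\<in>X. E v a)"

definition splits_neighbourhood :: "('a \<Rightarrow> 'a \<Rightarrow> bool) \<Rightarrow> 'a \<Rightarrow> 'a set \<Rightarrow> bool" where
  "splits_neighbourhood E v X \<longleftrightarrow> (\<exists>c\<in>X. \<exists>d\<in>X. E v c \<and> E c d \<and> \<not> E v d)"

lemma pairwise_agreeing_pairs_common_coordinate:
  assumes agree: "\<And>x y x' y'. R x y \<Longrightarrow> R x' y' \<Longrightarrow> x = x' \<or> y = y'" and "R x\<^sub>0 y\<^sub>0"
  shows "(\<forall>x y. R x y \<longrightarrow> x = x\<^sub>0) \<or> (\<forall>x y. R x y \<longrightarrow> y = y\<^sub>0)"
proof (rule disjCI)
  assume "\<not> (\<forall>x y. R x y \<longrightarrow> y = y\<^sub>0)"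
  then obtain x\<^sub>1 y\<^sub>1 where "R x\<^sub>1 y\<^sub>1" "y\<^sub>1 \<noteq> y\<^sub>0" by blast
  then have "x\<^sub>1 = x\<^sub>0" using agree \<open>R x\<^sub>0 y\<^sub>0\<close> by blast
  show "\<forall>x y. R x y \<longrightarrow> x = x\<^sub>0"
    using agree[OF _ \<open>R x\<^sub>0 y\<^sub>0\<close>] agree[OF _ \<open>R x\<^sub>1 y\<^sub>1\<close>] \<open>x\<^sub>1 = x\<^sub>0\<close> \<open>y\<^sub>1 \<noteq> y\<^sub>0\<close> by metis
qed

definition glued_cographs :: "'a set \<Rightarrow> ('a \<Rightarrow> 'a \<Rightarrow> bool) \<Rightarrow> bool" where
  "glued_cographs V E \<longleftrightarrow> (\<exists>V\<^sub>1 V\<^sub>2 v. V\<^sub>1 \<subseteq> V \<and> V\<^sub>2 \<subseteq> V \<and> v \<in> V \<and>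
     V = V\<^sub>1 \<union> V\<^sub>2 \<and> V\<^sub>1 \<inter> V\<^sub>2 = {v} \<and> card V\<^sub>1 > 1 \<and> card V\<^sub>2 > 1 \<and>
     cograph V\<^sub>1 E \<and> cograph V\<^sub>2 E \<and> (\<forall>x\<in>V\<^sub>1 - {v}. \<forall>y\<in>V\<^sub>2 - {v}. \<not> E x y))"

locale vertex_deletion =
  fixes V :: "'a set" and E :: "'a \<Rightarrow> 'a \<Rightarrow> bool" and v :: 'a
  assumes symp_E: "symp E" and v_in_V: "v \<in> V"
begin

abbreviation comps :: "'a set set" where
  "comps \<equiv> components (V - {v}) E"

lemma comps_subset: "H \<in> comps \<Longrightarrow> H \<subseteq> V - {v}"
  by (rule components_subset)

lemma edge_within_component:
  assumes "x \<in> V - {v}" "y \<in> V" "E x y"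
  shows "y \<in> component_of (V - {v}) E x \<union> {v}"
  using component_of_edge_closed[OF component_of_self[OF assms(1)]] assms(2,3) by blast

lemma P4_within_two_components:
  assumes "has_induced_P4 S E" "S \<subseteq> V"
  obtains H K where "H \<in> comps" "K \<in> comps" "has_induced_P4 (H \<union> K \<union> {v}) E"
    "H \<inter> S \<noteq> {}" "K \<inter> S \<noteq> {}"
proof -
  obtain a b c d where P: "a \<in> S" "b \<in> S" "c \<in> S" "d \<in> S" "distinct [a, b, c, d]"
      "E a b" "E b c" "E c d" "\<not> E a c" "\<not> E a d" "\<not> E b d"
    using assms(1) unfolding has_induced_P4_def by blast
  define h where "h = (if a = v then b else a)"
  define k where "k = (if d = v then c else d)"
  have hk: "h \<in> S" "k \<in> S" "h \<in> V - {v}" "k \<in> V - {v}"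
    using P(1-5) assms(2) unfolding h_def k_def by auto
  let ?H = "component_of (V - {v}) E h"
  let ?K = "component_of (V - {v}) E k"
  have "a \<in> ?H \<union> {v}" "b \<in> ?H \<union> {v}"
    using component_of_self[OF hk(3)] edge_within_component[of a b] P(1,2,6) assms(2)
    unfolding h_def by (auto split: if_splits)
  moreover have "d \<in> ?K \<union> {v}" "c \<in> ?K \<union> {v}"
    using component_of_self[OF hk(4)] edge_within_component[of d c] P(3,4,8) assms(2)
      sympD[OF symp_E] unfolding k_def by (auto split: if_splits)
  ultimately have "has_induced_P4 (?H \<union> ?K \<union> {v}) E"
    using P(5-11) by (intro has_induced_P4I[of a _ b c d]) auto
  moreover have "?H \<in> comps" "?K \<in> comps" "h \<in> ?H" "k \<in> ?K"
    using component_of_in_components[OF hk(3)] component_of_in_components[OF hk(4)]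
      component_of_self[OF hk(3)] component_of_self[OF hk(4)] by auto
  ultimately show thesis using that hk(1,2) by blast
qed

lemma cograph_minus_star_center:
  assumes "\<forall>H\<in>comps. cograph (H \<union> {v}) E" "H\<^sub>0 \<in> comps"
    "\<forall>H\<in>comps. \<forall>K\<in>comps. Gamma_edge V E v H K \<longrightarrow> H\<^sub>0 = H \<or> H\<^sub>0 = K"
  shows "cograph (V - H\<^sub>0) E"
  unfolding cograph_def
proof
  assume "has_induced_P4 (V - H\<^sub>0) E"
  then obtain H K where HK: "H \<in> comps" "K \<in> comps" "has_induced_P4 (H \<union> K \<union> {v}) E"
    "H \<noteq> H\<^sub>0" "K \<noteq> H\<^sub>0"
    by (rule P4_within_two_components) blast+
  show False
  proof (cases "H = K")
    case True
    then show False using HK(1,3) assms(1) by (simp add: cograph_def)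
  next
    case False
    then have "Gamma_edge V E v H K" using HK(3) by (simp add: Gamma_edge_def)
    then show False using assms(3) HK by blast
  qed
qed

lemma card_good_components_le_2:
  assumes "has_induced_P4 V E"
  shows "card {H \<in> comps. cograph (H \<union> {v}) E \<and> cograph (V - H) E} \<le> 2"
proof -
  obtain H K where HK: "H \<in> comps" "K \<in> comps" "has_induced_P4 (H \<union> K \<union> {v}) E"
    using P4_within_two_components[OF assms] by blast
  have "X \<in> {H, K}" if X: "X \<in> comps" "cograph (V - X) E" for X
  proof (rule ccontr)
    assume "X \<notin> {H, K}"
    then have "H \<union> K \<union> {v} \<subseteq> V - X"
      using components_disjoint[OF symp_E X(1)] HK(1,2) comps_subset X(1) v_in_V by blast
    then show False
      using has_induced_P4_mono[OF HK(3)] X(2) by (simp add: cograph_def)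
  qed
  then have "card {H \<in> comps. cograph (H \<union> {v}) E \<and> cograph (V - H) E} \<le> card {H, K}"
    by (intro card_mono) auto
  also have "\<dots> \<le> 2" by (simp add: card_insert_le_m1)
  finally show ?thesis .
qed

lemma P4_if_neighbour_and_split:
  assumes "X \<in> comps" "Y \<in> comps" "X \<noteq> Y"
    "has_neighbour_in E v X" "splits_neighbourhood E v Y"
  shows "has_induced_P4 (X \<union> Y \<union> {v}) E"
proof -
  obtain a where a: "a \<in> X" "E v a" using assms(4) by (auto simp: has_neighbour_in_def)
  obtain c d where cd: "c \<in> Y" "d \<in> Y" "E v c" "E c d" "\<not> E v d"
    using assms(5) by (auto simp: splits_neighbourhood_def)
  have no_edge: "\<not> E a c" "\<not> E a d"
    using components_no_edge[OF symp_E assms(1-3)] a(1) cd(1,2) by auto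
  have "X \<inter> Y = {}" "v \<notin> X" "v \<notin> Y"
    using components_disjoint[OF symp_E assms(1-3)] comps_subset assms(1,2) by auto
  then show ?thesis
    using a cd no_edge sympD[OF symp_E a(2)] by (intro has_induced_P4I[of a _ v c d]) auto
qed

lemma Gamma_edge_shape:
  assumes "H \<in> comps" "K \<in> comps" "H \<noteq> K" "cograph (H \<union> {v}) E" "cograph (K \<union> {v}) E"
    "has_induced_P4 (H \<union> K \<union> {v}) E"
  shows "has_neighbour_in E v H \<and> has_neighbour_in E v K
    \<and> (splits_neighbourhood E v H \<or> splits_neighbourhood E v K)"
proof -
  obtain a b c d where P: "{a, b, c, d} \<subseteq> H \<union> K \<union> {v}" "distinct [a, b, c, d]"
      "E a b" "E b c" "E c d" "\<not> E a c" "\<not> E a d" "\<not> E b d"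
    using assms(6) unfolding has_induced_P4_def by auto
  have HK: "H \<inter> K = {}" "H \<subseteq> V - {v}" "K \<subseteq> V - {v}"
    using components_disjoint[OF symp_E assms(1-3)] comps_subset assms(1,2) by auto
  have same_side: "x \<in> H \<longleftrightarrow> y \<in> H" if "x \<in> H \<union> K" "y \<in> H \<union> K" "E x y" for x y
    using components_edge_closed[OF assms(1), of x y] components_edge_closed[OF assms(1), of y x]
      sympD[OF symp_E that(3)] that HK by blast
  have not_one_side: "\<not> {a, b, c, d} \<subseteq> X \<union> {v}" if "cograph (X \<union> {v}) E" for X
    using that P(2-8) unfolding cograph_def by (auto intro: has_induced_P4I[of a _ b c d])
  have sym: "E b a" "E c b" "\<not> E c a" "\<not> E d b"
    using P(3,4,6,8) sympD[OF symp_E] by blast+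
  consider "v = b" | "v = c" | "v \<notin> {b, c}" by blast
  then show ?thesis
  proof cases
    case 1
    then have "a \<in> H \<union> K" "c \<in> H \<union> K" "d \<in> H \<union> K" "c \<in> H \<longleftrightarrow> d \<in> H"
      using P(1,2,5) same_side by auto
    moreover have "a \<in> H \<longleftrightarrow> c \<notin> H"
      using calculation not_one_side[OF assms(4)] not_one_side[OF assms(5)] HK(1) 1 by blast
    ultimately show ?thesis
      using 1 sym P(4,5,8) HK(1) unfolding has_neighbour_in_def splits_neighbourhood_def by blast
  next
    case 2
    then have "a \<in> H \<union> K" "b \<in> H \<union> K" "d \<in> H \<union> K" "a \<in> H \<longleftrightarrow> b \<in> H"
      using P(1,2,3) same_side by auto
    moreover have "d \<in> H \<longleftrightarrow> b \<notin> H"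
      using calculation not_one_side[OF assms(4)] not_one_side[OF assms(5)] HK(1) 2 by blast
    ultimately show ?thesis
      using 2 sym P(5,6) HK(1) unfolding has_neighbour_in_def splits_neighbourhood_def by blast
  next
    case 3
    then have "b \<in> H \<union> K" "c \<in> H \<union> K" using P(1) by auto
    then have "a \<in> H \<union> K \<longrightarrow> (a \<in> H \<longleftrightarrow> b \<in> H)" "b \<in> H \<longleftrightarrow> c \<in> H"
      "d \<in> H \<union> K \<longrightarrow> (d \<in> H \<longleftrightarrow> c \<in> H)"
      using same_side P(3-5) sym(2) by blast+
    then have "{a, b, c, d} \<subseteq> H \<union> {v} \<or> {a, b, c, d} \<subseteq> K \<union> {v}"
      using P(1) \<open>b \<in> H \<union> K\<close> \<open>c \<in> H \<union> K\<close> by blast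
    then show ?thesis using not_one_side[OF assms(4)] not_one_side[OF assms(5)] by blast
  qed
qed

lemma glued_cographs_if_good_component:
  assumes "finite V" "H\<^sub>0 \<in> comps" "K \<in> comps" "K \<noteq> H\<^sub>0"
    "cograph (H\<^sub>0 \<union> {v}) E" "cograph (V - H\<^sub>0) E"
  shows "glued_cographs V E"
proof -
  obtain h k where hk: "h \<in> H\<^sub>0" "k \<in> K"
    using components_nonempty assms(2,3) by blast
  have sub: "H\<^sub>0 \<subseteq> V - {v}" "K \<subseteq> V - {v}" using comps_subset assms(2,3) by auto
  have "k \<notin> H\<^sub>0" using components_disjoint[OF symp_E assms(3,2,4)] hk(2) by blast
  have "finite (H\<^sub>0 \<union> {v})" "finite (V - H\<^sub>0)"
    using finite_subset[OF _ assms(1)] sub v_in_V by auto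
  moreover have "{h, v} \<subseteq> H\<^sub>0 \<union> {v}" "{k, v} \<subseteq> V - H\<^sub>0"
    using hk \<open>k \<notin> H\<^sub>0\<close> sub v_in_V by auto
  ultimately have "card {h, v} \<le> card (H\<^sub>0 \<union> {v})" "card {k, v} \<le> card (V - H\<^sub>0)"
    by (metis card_mono)+
  moreover have "h \<noteq> v" "k \<noteq> v" using hk sub by auto
  ultimately have "card (H\<^sub>0 \<union> {v}) > 1" "card (V - H\<^sub>0) > 1" by simp_all
  moreover have "\<not> E x y" if "x \<in> H\<^sub>0" "y \<in> V - H\<^sub>0 - {v}" for x y
    using components_edge_closed[OF assms(2) that(1)] that(2) by blast
  ultimately show ?thesis
    unfolding glued_cographs_def using assms(5,6) sub v_in_V
    by (intro exI[of _ "H\<^sub>0 \<union> {v}"] exI[of _ "V - H\<^sub>0"] exI[of _ v]) auto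
qed

context
  fixes A B :: "'a set"
  assumes split: "V - {v} = A \<union> B" and disjoint: "A \<inter> B = {}"
    and no_edge: "\<forall>x\<in>A. \<forall>y\<in>B. \<not> E x y"
    and nonempty: "A \<noteq> {}" "B \<noteq> {}"
    and cograph_A: "cograph (A \<union> {v}) E" and cograph_B: "cograph (B \<union> {v}) E"
begin

lemma edge_closed_A:
  assumes "a \<in> A" "b \<in> V - {v}" "E a b"
  shows "b \<in> A"
proof (rule ccontr)
  assume "b \<notin> A"
  then have "b \<in> B" using assms(2) split by blast
  then show False using no_edge assms(1,3) by blast
qed

lemma component_within_side: "H \<in> comps \<Longrightarrow> H \<subseteq> A \<or> H \<subseteq> B"
proof -
  assume "H \<in> comps"
  then obtain x where x: "x \<in> V - {v}" "H = component_of (V - {v}) E x"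
    by (auto simp: components_eq_image)
  have closed_B: "b \<in> B" if "a \<in> B" "b \<in> V - {v}" "E a b" for a b
  proof (rule ccontr)
    assume "b \<notin> B"
    then have "b \<in> A" using that(2) split by blast
    then show False using no_edge that(1) sympD[OF symp_E that(3)] by blast
  qed
  have "x \<in> A \<or> x \<in> B" using x(1) split by blast
  then show ?thesis
  proof
    assume "x \<in> A"
    then show ?thesis unfolding x(2) using component_of_subset_closed_set edge_closed_A by metis
  next
    assume "x \<in> B"
    then show ?thesis unfolding x(2) using component_of_subset_closed_set closed_B by metis
  qed
qed

lemma disconnected_glued: "disconnected (V - {v}) E"
proof -
  obtain a b where ab: "a \<in> A" "b \<in> B" using nonempty by blast
  have ab_in: "a \<in> V - {v}" "b \<in> V - {v}" using ab split by auto
  have "component_of (V - {v}) E a \<subseteq> A"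
    by (rule component_of_subset_closed_set[OF ab(1) edge_closed_A])
  then have "b \<notin> component_of (V - {v}) E a" using ab(2) disjoint by blast
  then have "\<not> reach (V - {v}) E a b" using ab_in(2) by (simp add: component_of_def)
  then show ?thesis using ab_in unfolding disconnected_def by blast
qed

lemma cograph_component_plus_vertex:
  assumes "H \<in> comps"
  shows "cograph (H \<union> {v}) E"
  using component_within_side[OF assms]
proof
  assume "H \<subseteq> A"
  then show ?thesis by (intro cograph_subset[OF cograph_A]) blast
next
  assume "H \<subseteq> B"
  then show ?thesis by (intro cograph_subset[OF cograph_B]) blast
qed

lemma Gamma_edge_across:
  assumes "H \<in> comps" "K \<in> comps" "Gamma_edge V E v H K"
  shows "H \<subseteq> A \<and> K \<subseteq> B \<or> H \<subseteq> B \<and> K \<subseteq> A"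
proof -
  have "\<not> H \<union> K \<union> {v} \<subseteq> X \<union> {v}" if "cograph (X \<union> {v}) E" for X
    using that assms(3) has_induced_P4_mono unfolding Gamma_edge_def cograph_def by blast
  then show ?thesis
    using component_within_side[OF assms(1)] component_within_side[OF assms(2)] cograph_A cograph_B
    by blast
qed

text \<open>Of two \<open>\<Gamma>\<close>-edges without common end, one has an end splitting the neighbourhood
  of \<open>v\<close>; together with the end of the other edge on the same side it yields a \<open>P\<^sub>4\<close>
  within \<open>A \<union> {v}\<close> or \<open>B \<union> {v}\<close>.\<close>
lemma Gamma_edges_across_meet:
  assumes "H\<^sub>1 \<in> comps" "K\<^sub>1 \<in> comps" "H\<^sub>1 \<subseteq> A" "K\<^sub>1 \<subseteq> B" "Gamma_edge V E v H\<^sub>1 K\<^sub>1"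
    and "H\<^sub>2 \<in> comps" "K\<^sub>2 \<in> comps" "H\<^sub>2 \<subseteq> A" "K\<^sub>2 \<subseteq> B" "Gamma_edge V E v H\<^sub>2 K\<^sub>2"
  shows "H\<^sub>1 = H\<^sub>2 \<or> K\<^sub>1 = K\<^sub>2"
proof (rule ccontr)
  assume distinct: "\<not> (H\<^sub>1 = H\<^sub>2 \<or> K\<^sub>1 = K\<^sub>2)"
  have shape: "has_neighbour_in E v X \<and> has_neighbour_in E v Y
      \<and> (splits_neighbourhood E v X \<or> splits_neighbourhood E v Y)"
    if "X \<in> comps" "Y \<in> comps" "Gamma_edge V E v X Y" for X Y
    using Gamma_edge_shape[OF that(1,2)] that cograph_component_plus_vertex
    unfolding Gamma_edge_def by blast
  have no_P4: "\<not> has_induced_P4 (X \<union> {v}) E" if "X = A \<or> X = B" for X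
    using that cograph_A cograph_B unfolding cograph_def by blast
  show False
  proof (cases "splits_neighbourhood E v H\<^sub>1")
    case True
    then have "has_induced_P4 (H\<^sub>2 \<union> H\<^sub>1 \<union> {v}) E"
      using P4_if_neighbour_and_split[OF assms(6,1)] shape[OF assms(6,7,10)] distinct by blast
    moreover have "H\<^sub>2 \<union> H\<^sub>1 \<union> {v} \<subseteq> A \<union> {v}" using assms(3,8) by blast
    ultimately show False using has_induced_P4_mono no_P4 by blast
  next
    case False
    then have "has_induced_P4 (K\<^sub>2 \<union> K\<^sub>1 \<union> {v}) E"
      using P4_if_neighbour_and_split[OF assms(7,2)] shape[OF assms(1,2,5)] shape[OF assms(6,7,10)]
        distinct by blast
    moreover have "K\<^sub>2 \<union> K\<^sub>1 \<union> {v} \<subseteq> B \<union> {v}" using assms(4,9) by blast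
    ultimately show False using has_induced_P4_mono no_P4 by blast
  qed
qed

lemma Gamma_star:
  "\<exists>H\<^sub>0\<in>comps. \<forall>H\<in>comps. \<forall>K\<in>comps. Gamma_edge V E v H K \<longrightarrow> H\<^sub>0 = H \<or> H\<^sub>0 = K"
proof (cases "\<exists>H\<in>comps. \<exists>K\<in>comps. Gamma_edge V E v H K")
  case False
  obtain H where "H \<in> comps"
    using disconnected_two_components[OF disconnected_glued] by blast
  with False show ?thesis by blast
next
  case True
  define R where "R H K \<longleftrightarrow> H \<in> comps \<and> K \<in> comps \<and> H \<subseteq> A \<and> K \<subseteq> B \<and> Gamma_edge V E v H K"
    for H K
  have oriented: "R H K \<or> R K H" if "H \<in> comps" "K \<in> comps" "Gamma_edge V E v H K" for H K
    using Gamma_edge_across[OF that] Gamma_edge_commute[OF that(3)] that unfolding R_def by blast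
  obtain H\<^sub>1 K\<^sub>1 where R\<^sub>1: "R H\<^sub>1 K\<^sub>1" using True oriented by blast
  have "H = H' \<or> K = K'" if "R H K" "R H' K'" for H K H' K'
    using that Gamma_edges_across_meet unfolding R_def by blast
  then have "(\<forall>H K. R H K \<longrightarrow> H = H\<^sub>1) \<or> (\<forall>H K. R H K \<longrightarrow> K = K\<^sub>1)"
    using R\<^sub>1 by (rule pairwise_agreeing_pairs_common_coordinate)
  moreover have "H\<^sub>1 \<in> comps" "K\<^sub>1 \<in> comps" using R\<^sub>1 unfolding R_def by auto
  ultimately show ?thesis
  proof (elim disjE)
    assume "\<forall>H K. R H K \<longrightarrow> H = H\<^sub>1"
    then show ?thesis using oriented \<open>H\<^sub>1 \<in> comps\<close> by metis
  next
    assume "\<forall>H K. R H K \<longrightarrow> K = K\<^sub>1"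
    then show ?thesis using oriented \<open>K\<^sub>1 \<in> comps\<close> by metis
  qed
qed

end

end

section \<open>Pseudo-cographs\<close>

lemma pseudo_cograph_iff_glued:
  assumes "symp E"
  shows "pseudo_cograph V E \<longleftrightarrow>
    card V \<le> 2 \<or> glued_cographs V E \<or> glued_cographs V (compl_edges E)"
proof -
  define glue where "glue V\<^sub>1 V\<^sub>2 v \<longleftrightarrow> V\<^sub>1 \<subseteq> V \<and> V\<^sub>2 \<subseteq> V \<and> v \<in> V \<and> V = V\<^sub>1 \<union> V\<^sub>2 \<and>
    V\<^sub>1 \<inter> V\<^sub>2 = {v} \<and> card V\<^sub>1 > 1 \<and> card V\<^sub>2 > 1 \<and> cograph V\<^sub>1 E \<and> cograph V\<^sub>2 E" for V\<^sub>1 V\<^sub>2 v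
  have pseudo: "pseudo_cograph V E \<longleftrightarrow> card V \<le> 2 \<or> (\<exists>V\<^sub>1 V\<^sub>2 v. glue V\<^sub>1 V\<^sub>2 v \<and>
      ((\<forall>x\<in>V\<^sub>1 - {v}. \<forall>y\<in>V\<^sub>2 - {v}. E x y) \<or> (\<forall>x\<in>V\<^sub>1 - {v}. \<forall>y\<in>V\<^sub>2 - {v}. \<not> E x y)))"
    by (simp only: pseudo_cograph_def glue_def conj_assoc)
  have glued: "glued_cographs V F \<longleftrightarrow>
      (\<exists>V\<^sub>1 V\<^sub>2 v. glue V\<^sub>1 V\<^sub>2 v \<and> (\<forall>x\<in>V\<^sub>1 - {v}. \<forall>y\<in>V\<^sub>2 - {v}. \<not> F x y))"
    if "F = E \<or> F = compl_edges E" for F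
    by (simp only: glued_cographs_def glue_def conj_assoc cograph_compl_choice[OF assms that])
  have join: "(\<forall>x\<in>V\<^sub>1 - {v}. \<forall>y\<in>V\<^sub>2 - {v}. \<not> compl_edges E x y)
      \<longleftrightarrow> (\<forall>x\<in>V\<^sub>1 - {v}. \<forall>y\<in>V\<^sub>2 - {v}. E x y)" if "glue V\<^sub>1 V\<^sub>2 v" for V\<^sub>1 V\<^sub>2 v
  proof -
    have "V\<^sub>1 \<inter> V\<^sub>2 = {v}" using that by (simp add: glue_def)
    then have "x \<noteq> y" if "x \<in> V\<^sub>1 - {v}" "y \<in> V\<^sub>2 - {v}" for x y using that by blast
    then show ?thesis unfolding compl_edges_def by blast
  qed
  show ?thesis
    unfolding pseudo glued[of E, simplified] glued[of "compl_edges E", simplified] using join by blast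
qed

text \<open>Conditions (B1)--(B3), and the components counted in (C2), for \<open>F\<close> the graph or its
  complement.\<close>

definition star_condition :: "'a set \<Rightarrow> ('a \<Rightarrow> 'a \<Rightarrow> bool) \<Rightarrow> 'a \<Rightarrow> ('a \<Rightarrow> 'a \<Rightarrow> bool) \<Rightarrow> bool"
  where "star_condition V E v F \<longleftrightarrow> disconnected (V - {v}) F \<and>
    (\<forall>H\<in>components (V - {v}) F. cograph (H \<union> {v}) E) \<and>
    (\<exists>H\<^sub>0\<in>components (V - {v}) F. \<forall>H\<in>components (V - {v}) F. \<forall>H'\<in>components (V - {v}) F.
       Gamma_edge V E v H H' \<longrightarrow> H\<^sub>0 = H \<or> H\<^sub>0 = H')"

definition good_components :: "'a set \<Rightarrow> ('a \<Rightarrow> 'a \<Rightarrow> bool) \<Rightarrow> 'a \<Rightarrow> ('a \<Rightarrow> 'a \<Rightarrow> bool) \<Rightarrow> 'a set set"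
  where "good_components V E v F =
    {H \<in> components (V - {v}) F. cograph (H \<union> {v}) E \<and> cograph (V - H) E}"

lemma pseudo_cograph_if_good_components:
  assumes "graph V E" "v \<in> V" "F = E \<or> F = compl_edges E" "disconnected (V - {v}) F"
    "good_components V E v F \<noteq> {}"
  shows "pseudo_cograph V E"
proof -
  obtain H\<^sub>0 where H\<^sub>0: "H\<^sub>0 \<in> good_components V E v F" using assms(5) by blast
  have sym: "symp E" by (rule graph_symp[OF assms(1)])
  interpret vertex_deletion V F v
    using symp_compl_choice[OF sym assms(3)] assms(2) by unfold_locales
  obtain K where "K \<in> comps" "K \<noteq> H\<^sub>0"
    using disconnected_two_components[OF assms(4)] by blast
  moreover have "finite V" using assms(1) by (simp add: graph_def)
  ultimately have "glued_cographs V F"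
    using glued_cographs_if_good_component H\<^sub>0 cograph_compl_choice[OF sym assms(3)]
    unfolding good_components_def by blast
  then show ?thesis using pseudo_cograph_iff_glued[OF sym] assms(3) by blast
qed

lemma pseudo_cograph_if_cograph:
  assumes "graph V E" "cograph V E"
  shows "pseudo_cograph V E"
proof (cases "card V \<le> 2")
  case True
  then show ?thesis by (simp add: pseudo_cograph_def)
next
  case False
  then have "V \<noteq> {}" by auto
  then obtain v where v: "v \<in> V" by blast
  have "finite V" using assms(1) by (simp add: graph_def)
  then have "2 \<le> card (V - {v})" using False v by simp
  moreover have "graph (V - {v}) E" by (rule graph_subset[OF assms(1)]) blast
  moreover have "cograph (V - {v}) E" by (rule cograph_subset[OF assms(2)]) blast
  ultimately have "disconnected (V - {v}) E \<or> disconnected (V - {v}) (compl_edges E)"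
    using cograph_disconnected_or_compl_disconnected by blast
  then obtain F where F: "F = E \<or> F = compl_edges E" "disconnected (V - {v}) F" by blast
  then obtain H where H: "H \<in> components (V - {v}) F"
    using disconnected_two_components by blast
  then have "H \<union> {v} \<subseteq> V" using components_subset v by blast
  then have "H \<in> good_components V E v F"
    using H cograph_subset[OF assms(2)] unfolding good_components_def by blast
  then show ?thesis using pseudo_cograph_if_good_components[OF assms(1) v F] by blast
qed

lemma star_condition_if_glued:
  assumes "graph V E" "F = E \<or> F = compl_edges E" "glued_cographs V F"
  shows "\<exists>v\<in>V. star_condition V E v F"
proof -
  have sym: "symp E" by (rule graph_symp[OF assms(1)])
  obtain V\<^sub>1 V\<^sub>2 v where glue: "v \<in> V" "V = V\<^sub>1 \<union> V\<^sub>2" "V\<^sub>1 \<inter> V\<^sub>2 = {v}"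
      "card V\<^sub>1 > 1" "card V\<^sub>2 > 1" "cograph V\<^sub>1 F" "cograph V\<^sub>2 F"
      "\<forall>x\<in>V\<^sub>1 - {v}. \<forall>y\<in>V\<^sub>2 - {v}. \<not> F x y"
    using assms(3) unfolding glued_cographs_def by blast
  interpret vertex_deletion V F v
    using symp_compl_choice[OF sym assms(2)] glue(1) by unfold_locales
  have nonempty: "X - {v} \<noteq> {}" if "card X > 1" for X
  proof
    assume "X - {v} = {}"
    then have "card X \<le> card {v}" by (intro card_mono) auto
    with that show False by simp
  qed
  have split: "V - {v} = (V\<^sub>1 - {v}) \<union> (V\<^sub>2 - {v})" "(V\<^sub>1 - {v}) \<inter> (V\<^sub>2 - {v}) = {}"
    using glue(2,3) by blast+
  have "V\<^sub>1 - {v} \<union> {v} = V\<^sub>1" "V\<^sub>2 - {v} \<union> {v} = V\<^sub>2" using glue(3) by blast+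
  then have cographs: "cograph (V\<^sub>1 - {v} \<union> {v}) F" "cograph (V\<^sub>2 - {v} \<union> {v}) F"
    using glue(6,7) by simp_all
  note glued = split glue(8) nonempty[OF glue(4)] nonempty[OF glue(5)] cographs
  have "star_condition V E v F"
    unfolding star_condition_def cograph_compl_choice[OF sym assms(2), symmetric]
      Gamma_edge_compl_choice[OF sym assms(2), symmetric]
    using disconnected_glued[OF glued] cograph_component_plus_vertex[OF glued] Gamma_star[OF glued]
    by blast
  then show ?thesis using glue(1) ..
qed

lemma star_condition_if_pseudo_cograph:
  assumes "graph V E" "pseudo_cograph V E" "\<not> cograph V E"
  shows "\<exists>v\<in>V. \<exists>F. (F = E \<or> F = compl_edges E) \<and> star_condition V E v F"
proof -
  have "finite V" using assms(1) by (simp add: graph_def)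
  then have "\<not> card V \<le> 2" using assms(3) cograph_if_card_le_2 by blast
  then have "glued_cographs V E \<or> glued_cographs V (compl_edges E)"
    using assms(2) pseudo_cograph_iff_glued[OF graph_symp[OF assms(1)]] by simp
  then show ?thesis
  proof
    assume "glued_cographs V E"
    then show ?thesis using star_condition_if_glued[OF assms(1), of E] by blast
  next
    assume "glued_cographs V (compl_edges E)"
    then show ?thesis using star_condition_if_glued[OF assms(1), of "compl_edges E"] by blast
  qed
qed

lemma good_components_card_if_star_condition:
  assumes "graph V E" "v \<in> V" "F = E \<or> F = compl_edges E" "star_condition V E v F"
    "\<not> cograph V E"
  shows "disconnected (V - {v}) F \<and>
    1 \<le> card (good_components V E v F) \<and> card (good_components V E v F) \<le> 2"
proof -
  have sym: "symp E" by (rule graph_symp[OF assms(1)])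
  interpret vertex_deletion V F v
    using symp_compl_choice[OF sym assms(3)] assms(2) by unfold_locales
  note to_E = cograph_compl_choice[OF sym assms(3)] Gamma_edge_compl_choice[OF sym assms(3)]
  obtain H\<^sub>0 where H\<^sub>0: "H\<^sub>0 \<in> comps"
      "\<forall>H\<in>comps. \<forall>K\<in>comps. Gamma_edge V F v H K \<longrightarrow> H\<^sub>0 = H \<or> H\<^sub>0 = K"
    using assms(4) to_E unfolding star_condition_def by auto
  have "\<forall>H\<in>comps. cograph (H \<union> {v}) F" using assms(4) to_E unfolding star_condition_def by auto
  then have "H\<^sub>0 \<in> good_components V E v F"
    using cograph_minus_star_center[OF _ H\<^sub>0] H\<^sub>0(1) to_E unfolding good_components_def by auto
  moreover have "finite (good_components V E v F)"
    using assms(1) finite_components[of "V - {v}" F] unfolding good_components_def graph_def by simp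
  ultimately have "1 \<le> card (good_components V E v F)"
    by (simp add: Suc_le_eq card_gt_0_iff) blast
  moreover have "has_induced_P4 V F"
    using assms(5) has_induced_P4_compl_choice[OF sym assms(3)] by (simp add: cograph_def)
  then have "card (good_components V E v F) \<le> 2"
    using card_good_components_le_2 to_E unfolding good_components_def by simp
  moreover have "disconnected (V - {v}) F" using assms(4) unfolding star_condition_def ..
  ultimately show ?thesis by blast
qed

theorem mainTheorem12:
  fixes V :: "'a set" and E :: "'a \<Rightarrow> 'a \<Rightarrow> bool"
  assumes "graph V E"
  shows "(pseudo_cograph V E \<longleftrightarrow>
            cograph V E \<or>
            (\<exists>v\<in>V. \<exists>F. (F = E \<or> F = compl_edges E) \<and>
               disconnected (V - {v}) F \<and>
               (\<forall>H\<in>components (V - {v}) F. cograph (H \<union> {v}) E) \<and>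
               (\<exists>H0\<in>components (V - {v}) F.
                  \<forall>H\<in>components (V - {v}) F. \<forall>H'\<in>components (V - {v}) F.
                    Gamma_edge V E v H H' \<longrightarrow> H0 = H \<or> H0 = H')))
       \<and> (pseudo_cograph V E \<longleftrightarrow>
            cograph V E \<or>
            (\<exists>v\<in>V. \<exists>F. (F = E \<or> F = compl_edges E) \<and>
               disconnected (V - {v}) F \<and>
               1 \<le> card {H \<in> components (V - {v}) F. cograph (H \<union> {v}) E \<and> cograph (V - H) E} \<and>
               card {H \<in> components (V - {v}) F. cograph (H \<union> {v}) E \<and> cograph (V - H) E} \<le> 2))"
proof -
  define B where "B \<longleftrightarrow> (\<exists>v\<in>V. \<exists>F. (F = E \<or> F = compl_edges E) \<and> star_condition V E v F)"
  define C where "C \<longleftrightarrow> (\<exists>v\<in>V. \<exists>F. (F = E \<or> F = compl_edges E) \<and> disconnected (V - {v}) F \<and>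
    1 \<le> card (good_components V E v F) \<and> card (good_components V E v F) \<le> 2)"
  have "pseudo_cograph V E \<Longrightarrow> \<not> cograph V E \<Longrightarrow> B"
    unfolding B_def by (rule star_condition_if_pseudo_cograph[OF assms])
  moreover have "B \<Longrightarrow> \<not> cograph V E \<Longrightarrow> C"
    unfolding B_def C_def using good_components_card_if_star_condition[OF assms] by blast
  moreover have "C \<Longrightarrow> pseudo_cograph V E"
    unfolding C_def using pseudo_cograph_if_good_components[OF assms] by fastforce
  moreover have "cograph V E \<Longrightarrow> pseudo_cograph V E"
    by (rule pseudo_cograph_if_cograph[OF assms])
  ultimately have "(pseudo_cograph V E \<longleftrightarrow> cograph V E \<or> B) \<and> (pseudo_cograph V E \<longleftrightarrow> cograph V E \<or> C)"
    by argo
  then show ?thesis unfolding B_def C_def star_condition_def good_components_def .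
qed

end
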